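(* Let $\lambda>1$ and suppose $(P_\lambda)$ is feasible. Let $x^*$ be an optimal solution to $(P_\lambda)$ and $\mathcal{L}$ a laminar decomposition of $x^*$; let $x'$ and $\mathcal{L}'$ be such that $(x',\mathcal{L}')$ is a rainbow-free decomposition with $\mathrm{supp}(x')\subseteq\mathrm{supp}(x^* )$, $\mathcal{L}\subseteq\mathcal{L}'$ and $x'(\delta(S))\le x^*(\delta(S))$ for all $S\in\mathcal{S}$; and let $T$ be a spanning tree of $G$ obtained as the concatenation of spanning trees $T_L\subseteq\mathrm{supp}(x')$ of $G^{\mathcal{L}'}_L$, one for each $L\in\mathcal{L}'$. Let $y^*$ be an optimal solution to $\max_{y\in\mathbb{R}^{\mathcal{S}}_{\ge0}}g_\lambda(y)$. Then $c(T)\le\sum_ec^{y^*}_ex^*_e=\sum_ec_ex^*_e+\lambda\sum_{S\in\mathcal{S}}b_Sy^*_S$.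
   Context: Setting: $G=(V,E)$ undirected connected graph, costs $c_e\ge0$, a chain $\mathcal{S}$ of node sets $S_1\subsetneq\dots\subsetneq S_\ell\subsetneq V$, integers $b_S$. $E(S)$ = edges with both ends in $S$, $\delta(S)$ = edges with exactly one end in $S$, $z(F)=\sum_{e\in F}z_e$, $\mathrm{supp}(z)=\{e:z_e>0\}$, $c(T)=\sum_{e\in T}c_e$. $P_{ST}(G)=\{x\in\mathbb{R}^E_{\ge0}: x(E(S))\le|S|-1\ \forall\emptyset\ne S\subsetneq V,\ x(E)=|V|-1\}$. $(P_\lambda)$: minimize $\sum_ec_ex_e$ over $x\in P_{ST}(G)$ with $x(\delta(S))\le\lambda b_S$ for all $S\in\mathcal{S}$. For $y\in\mathbb{R}^{\mathcal{S}}$, $c^y_e=c_e+\sum_{S\in\mathcal{S}:e\in\delta(S)}y_S$ and $g_\lambda(y)=\min_{x\in P_{ST}(G)}\big(\sum_ec^y_ex_e-\lambda\sum_Sb_Sy_S\big)$. A laminar decomposition of $x\in P_{ST}(G)$ is an inclusion-wise maximal laminar family of nonempty sets $A\subseteq V$ with $x(E(A))=|A|-1$. For a laminar family $\mathcal{L}$ and $L\in\mathcal{L}$, $G^{\mathcal{L}}_L$ is obtained from $(L,E(L))$ by contracting the maximal members of $\mathcal{L}$ strictly contained in $L$. With $\mathcal{S}_e=\{S\in\mathcal{S}:e\in\delta(S)\}$, edges $e,f$ form a rainbow if $\mathcal{S}_e\subseteq\mathcal{S}_f$ or $\mathcal{S}_f\subseteq\mathcal{S}_e$; $(x,\mathcal{L})$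 is a rainbow-free decomposition if $\mathcal{L}$ is a laminar decomposition of $x$ and for every $L\in\mathcal{L}$ no two edges of $\mathrm{supp}(x)\cap E(G^{\mathcal{L}}_L)$ form a rainbow. *)

theory Defs
  imports Complex_Main
begin

text \<open>A finite undirected (multi)graph: vertex set V, edge identifiers E,
  and an endpoint map ends assigning each edge its two distinct endpoints.\<close>

definition graph :: "'a set \<Rightarrow> 'e set \<Rightarrow> ('e \<Rightarrow> 'a set) \<Rightarrow> bool" where
  "graph V E ends \<longleftrightarrow> finite V \<and> finite E \<and>
     (\<forall>e\<in>E. ends e \<subseteq> V \<and> card (ends e) = 2)"

definition adj :: "'e set \<Rightarrow> ('e \<Rightarrow> 'n set) \<Rightarrow> ('n \<times> 'n) set" where
  "adj F en = {(u, v). \<exists>e\<in>F. en e = {u, v}}"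

definition connected_on :: "'n set \<Rightarrow> 'e set \<Rightarrow> ('e \<Rightarrow> 'n set) \<Rightarrow> bool" where
  "connected_on N F en \<longleftrightarrow> (\<forall>u\<in>N. \<forall>v\<in>N. (u, v) \<in> (adj F en)\<^sup>*)"

definition spanning_tree :: "'n set \<Rightarrow> 'e set \<Rightarrow> ('e \<Rightarrow> 'n set) \<Rightarrow> 'e set \<Rightarrow> bool" where
  "spanning_tree N F en T \<longleftrightarrow> T \<subseteq> F \<and> finite T \<and> connected_on N T en \<and> card T + 1 = card N"

definition Ein :: "'e set \<Rightarrow> ('e \<Rightarrow> 'a set) \<Rightarrow> 'a set \<Rightarrow> 'e set" where
  "Ein E ends S = {e\<in>E. ends e \<subseteq> S}"

definition delta :: "'e set \<Rightarrow> ('e \<Rightarrow> 'a set) \<Rightarrow> 'a set \<Rightarrow> 'e set" where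
  "delta E ends S = {e\<in>E. card (ends e \<inter> S) = 1}"

definition supp :: "'e set \<Rightarrow> ('e \<Rightarrow> real) \<Rightarrow> 'e set" where
  "supp E z = {e\<in>E. z e > 0}"

definition PST :: "'a set \<Rightarrow> 'e set \<Rightarrow> ('e \<Rightarrow> 'a set) \<Rightarrow> ('e \<Rightarrow> real) set" where
  "PST V E ends = {x. (\<forall>e\<in>E. x e \<ge> 0) \<and>
      (\<forall>S. S \<noteq> {} \<and> S \<subset> V \<longrightarrow> sum x (Ein E ends S) \<le> real (card S) - 1) \<and>
      sum x E = real (card V) - 1}"

definition chain_family :: "'a set \<Rightarrow> 'a set set \<Rightarrow> bool" where
  "chain_family V \<S> \<longleftrightarrow> finite \<S> \<and> (\<forall>S\<in>\<S>. S \<subset> V) \<and>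
     (\<forall>S\<in>\<S>. \<forall>S'\<in>\<S>. S \<subseteq> S' \<or> S' \<subseteq> S)"

definition feasible_P :: "'a set \<Rightarrow> 'e set \<Rightarrow> ('e \<Rightarrow> 'a set) \<Rightarrow> 'a set set \<Rightarrow>
    ('a set \<Rightarrow> int) \<Rightarrow> real \<Rightarrow> ('e \<Rightarrow> real) \<Rightarrow> bool" where
  "feasible_P V E ends \<S> b lam x \<longleftrightarrow> x \<in> PST V E ends \<and>
     (\<forall>S\<in>\<S>. sum x (delta E ends S) \<le> lam * real_of_int (b S))"

definition optimal_P :: "'a set \<Rightarrow> 'e set \<Rightarrow> ('e \<Rightarrow> 'a set) \<Rightarrow> ('e \<Rightarrow> real) \<Rightarrow> 'a set set \<Rightarrow>
    ('a set \<Rightarrow> int) \<Rightarrow> real \<Rightarrow> ('e \<Rightarrow> real) \<Rightarrow> bool" where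
  "optimal_P V E ends c \<S> b lam x \<longleftrightarrow> feasible_P V E ends \<S> b lam x \<and>
     (\<forall>x'. feasible_P V E ends \<S> b lam x' \<longrightarrow> (\<Sum>e\<in>E. c e * x e) \<le> (\<Sum>e\<in>E. c e * x' e))"

definition cy :: "'e set \<Rightarrow> ('e \<Rightarrow> 'a set) \<Rightarrow> ('e \<Rightarrow> real) \<Rightarrow> 'a set set \<Rightarrow>
    ('a set \<Rightarrow> real) \<Rightarrow> 'e \<Rightarrow> real" where
  "cy E ends c \<S> y e = c e + (\<Sum>S\<in>{S\<in>\<S>. e \<in> delta E ends S}. y S)"

definition g_lam :: "'a set \<Rightarrow> 'e set \<Rightarrow> ('e \<Rightarrow> 'a set) \<Rightarrow> ('e \<Rightarrow> real) \<Rightarrow> 'a set set \<Rightarrow>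
    ('a set \<Rightarrow> int) \<Rightarrow> real \<Rightarrow> ('a set \<Rightarrow> real) \<Rightarrow> real" where
  "g_lam V E ends c \<S> b lam y =
     Inf ((\<lambda>x. (\<Sum>e\<in>E. cy E ends c \<S> y e * x e) - lam * (\<Sum>S\<in>\<S>. real_of_int (b S) * y S))
          ` PST V E ends)"

definition optimal_dual :: "'a set \<Rightarrow> 'e set \<Rightarrow> ('e \<Rightarrow> 'a set) \<Rightarrow> ('e \<Rightarrow> real) \<Rightarrow> 'a set set \<Rightarrow>
    ('a set \<Rightarrow> int) \<Rightarrow> real \<Rightarrow> ('a set \<Rightarrow> real) \<Rightarrow> bool" where
  "optimal_dual V E ends c \<S> b lam y \<longleftrightarrow> (\<forall>S\<in>\<S>. y S \<ge> 0) \<and>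
     (\<forall>y'. (\<forall>S\<in>\<S>. y' S \<ge> 0) \<longrightarrow> g_lam V E ends c \<S> b lam y' \<le> g_lam V E ends c \<S> b lam y)"

definition tight :: "'a set \<Rightarrow> 'e set \<Rightarrow> ('e \<Rightarrow> 'a set) \<Rightarrow> ('e \<Rightarrow> real) \<Rightarrow> 'a set \<Rightarrow> bool" where
  "tight V E ends x A \<longleftrightarrow> A \<noteq> {} \<and> A \<subseteq> V \<and> sum x (Ein E ends A) = real (card A) - 1"

definition laminar :: "'a set set \<Rightarrow> bool" where
  "laminar \<L> \<longleftrightarrow> (\<forall>A\<in>\<L>. \<forall>B\<in>\<L>. A \<subseteq> B \<or> B \<subseteq> A \<or> A \<inter> B = {})"

definition laminar_decomp :: "'a set \<Rightarrow> 'e set \<Rightarrow> ('e \<Rightarrow> 'a set) \<Rightarrow> ('e \<Rightarrow> real) \<Rightarrow> 'a set set \<Rightarrow> bool" where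
  "laminar_decomp V E ends x \<L> \<longleftrightarrow> x \<in> PST V E ends \<and>
     laminar \<L> \<and> (\<forall>A\<in>\<L>. tight V E ends x A) \<and>
     (\<forall>\<L>'. \<L> \<subseteq> \<L>' \<and> laminar \<L>' \<and> (\<forall>A\<in>\<L>'. tight V E ends x A) \<longrightarrow> \<L>' = \<L>)"

definition children :: "'a set set \<Rightarrow> 'a set \<Rightarrow> 'a set set" where
  "children \<L> L0 = {C\<in>\<L>. C \<subset> L0 \<and> \<not> (\<exists>D\<in>\<L>. C \<subset> D \<and> D \<subset> L0)}"

text \<open>Node of the contracted graph G^L_{L0} that vertex v is mapped to.\<close>
definition cls :: "'a set set \<Rightarrow> 'a set \<Rightarrow> 'a \<Rightarrow> 'a set" where
  "cls \<L> L0 v = (if \<exists>C\<in>children \<L> L0. v \<in> C then (THE C. C \<in> children \<L> L0 \<and> v \<in> C) else {v})"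

definition contr_nodes :: "'a set set \<Rightarrow> 'a set \<Rightarrow> 'a set set" where
  "contr_nodes \<L> L0 = cls \<L> L0 ` L0"

text \<open>Edges of G^L_{L0}: edges of E(L0) not becoming loops (not inside a contracted child).\<close>
definition contr_edges :: "'e set \<Rightarrow> ('e \<Rightarrow> 'a set) \<Rightarrow> 'a set set \<Rightarrow> 'a set \<Rightarrow> 'e set" where
  "contr_edges E ends \<L> L0 = {e\<in>Ein E ends L0. \<not> (\<exists>C\<in>children \<L> L0. ends e \<subseteq> C)}"

definition contr_ends :: "('e \<Rightarrow> 'a set) \<Rightarrow> 'a set set \<Rightarrow> 'a set \<Rightarrow> 'e \<Rightarrow> 'a set set" where
  "contr_ends ends \<L> L0 e = cls \<L> L0 ` ends e"

definition cut_sets :: "'e set \<Rightarrow> ('e \<Rightarrow> 'a set) \<Rightarrow> 'a set set \<Rightarrow> 'e \<Rightarrow> 'a set set" where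
  "cut_sets E ends \<S> e = {S\<in>\<S>. e \<in> delta E ends S}"

definition rainbow :: "'e set \<Rightarrow> ('e \<Rightarrow> 'a set) \<Rightarrow> 'a set set \<Rightarrow> 'e \<Rightarrow> 'e \<Rightarrow> bool" where
  "rainbow E ends \<S> e f \<longleftrightarrow> cut_sets E ends \<S> e \<subseteq> cut_sets E ends \<S> f \<or>
                             cut_sets E ends \<S> f \<subseteq> cut_sets E ends \<S> e"

definition rainbow_free :: "'a set \<Rightarrow> 'e set \<Rightarrow> ('e \<Rightarrow> 'a set) \<Rightarrow> 'a set set \<Rightarrow>
    ('e \<Rightarrow> real) \<Rightarrow> 'a set set \<Rightarrow> bool" where
  "rainbow_free V E ends \<S> x \<L> \<longleftrightarrow> laminar_decomp V E ends x \<L> \<and>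
     (\<forall>L0\<in>\<L>. \<forall>e\<in>supp E x \<inter> contr_edges E ends \<L> L0. \<forall>f\<in>supp E x \<inter> contr_edges E ends \<L> L0.
        e \<noteq> f \<longrightarrow> \<not> rainbow E ends \<S> e f)"

end

theory Submission
  imports Defs "HOL-Analysis.Analysis"
begin

text \<open>
  Lagrangian duality over the compact convex set \<open>P_ST\<close> has no gap, so an optimal multiplier \<open>y\<^sup>*\<close>
  makes \<open>x\<^sup>*\<close> a minimiser of \<open>c\<^sup>y\<^sup>*\<close> over \<open>P_ST\<close>, and complementary slackness gives the equation.

  The concatenated tree \<open>T\<close> has exactly \<open>|L| - 1\<close> edges inside every member \<open>L\<close> of \<open>\<L>'\<close>, since the
  vertex counts of the contracted graphs telescope along the laminar family. Uncrossing a tight set of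
  \<open>x\<^sup>*\<close> with the members of the maximal laminar family \<open>\<L> \<subseteq> \<L>'\<close> shows that \<open>T\<close> has at least \<open>|S| - 1\<close>
  edges inside every tight set \<open>S\<close>. As \<open>T \<subseteq> supp x\<^sup>*\<close>, the point \<open>x\<^sup>* + \<epsilon> (x\<^sup>* - \<chi>\<^sub>T)\<close> stays in \<open>P_ST\<close> for small
  \<open>\<epsilon> > 0\<close>, and optimality of \<open>x\<^sup>*\<close> for \<open>c\<^sup>y\<^sup>*\<close> yields \<open>c\<^sup>y\<^sup>*(T) \<le> c\<^sup>y\<^sup>* x\<^sup>*\<close>; finally \<open>c \<le> c\<^sup>y\<^sup>*\<close> as \<open>y\<^sup>* \<ge> 0\<close>.
\<close>

section \<open>Approximate Lagrange multipliers\<close>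

text \<open>\<open>mix t x z\<close> stands for the convex combination \<open>t x + (1 - t) z\<close>; keeping it abstract
  avoids requiring a vector-space structure on the domain.\<close>

definition mix_closed :: "'x set \<Rightarrow> (real \<Rightarrow> 'x \<Rightarrow> 'x \<Rightarrow> 'x) \<Rightarrow> bool" where
  "mix_closed X mix \<longleftrightarrow> (\<forall>x\<in>X. \<forall>z\<in>X. \<forall>t\<in>{0..1}. mix t x z \<in> X)"

definition affine_along :: "'x set \<Rightarrow> (real \<Rightarrow> 'x \<Rightarrow> 'x \<Rightarrow> 'x) \<Rightarrow> ('x \<Rightarrow> real) \<Rightarrow> bool" where
  "affine_along X mix f \<longleftrightarrow>
     (\<forall>x\<in>X. \<forall>z\<in>X. \<forall>t\<in>{0..1}. f (mix t x z) = t * f x + (1 - t) * f z)"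

lemma affine_along_subset:
  "affine_along X mix f \<Longrightarrow> Y \<subseteq> X \<Longrightarrow> affine_along Y mix f"
  unfolding affine_along_def by blast

lemma affine_along_add_weighted_sum:
  assumes "affine_along X mix f" and "\<And>i. i \<in> I \<Longrightarrow> affine_along X mix (h i)"
  shows "affine_along X mix (\<lambda>x. f x + (\<Sum>i\<in>I. y i * h i x))"
  unfolding affine_along_def
proof (intro ballI)
  fix x z and t :: real assume xz: "x \<in> X" "z \<in> X" and t: "t \<in> {0..1}"
  have "(\<Sum>i\<in>I. y i * h i (mix t x z)) = (\<Sum>i\<in>I. t * (y i * h i x) + (1 - t) * (y i * h i z))"
  proof (rule sum.cong[OF refl])
    fix i assume "i \<in> I"
    then have e: "h i (mix t x z) = t * h i x + (1 - t) * h i z"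
      using assms(2) xz t by (simp add: affine_along_def)
    show "y i * h i (mix t x z) = t * (y i * h i x) + (1 - t) * (y i * h i z)"
      unfolding e by (simp add: algebra_simps)
  qed
  also have "\<dots> = t * (\<Sum>i\<in>I. y i * h i x) + (1 - t) * (\<Sum>i\<in>I. y i * h i z)"
    by (simp add: sum.distrib sum_distrib_left)
  finally show "f (mix t x z) + (\<Sum>i\<in>I. y i * h i (mix t x z)) =
      t * (f x + (\<Sum>i\<in>I. y i * h i x)) + (1 - t) * (f z + (\<Sum>i\<in>I. y i * h i z))"
    using assms(1) xz t by (simp add: affine_along_def algebra_simps)
qed

lemma mix_closed_sublevel:
  assumes "mix_closed X mix" and "affine_along X mix h"
  shows "mix_closed {x\<in>X. h x \<le> 0} mix"
  unfolding mix_closed_def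
proof (intro ballI)
  fix x z and t :: real assume x: "x \<in> {x\<in>X. h x \<le> 0}" and z: "z \<in> {x\<in>X. h x \<le> 0}" and t: "t \<in> {0..1}"
  have "h (mix t x z) = t * h x + (1 - t) * h z"
    using assms(2) x z t by (simp add: affine_along_def)
  also have "\<dots> \<le> 0"
    using x z t by (auto intro!: add_nonpos_nonpos mult_nonneg_nonpos)
  finally show "mix t x z \<in> {x\<in>X. h x \<le> 0}"
    using assms(1) x z t by (simp add: mix_closed_def)
qed

lemma compact_sublevel:
  fixes h :: "'x::topological_space \<Rightarrow> real"
  assumes "compact X" and "continuous_on X h"
  shows "compact {x\<in>X. h x \<le> c}"
proof -
  have "closedin (top_of_set X) (X \<inter> h -` {..c})"
    by (rule continuous_closedin_preimage[OF assms(2)]) auto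
  moreover have "X \<inter> h -` {..c} = {x\<in>X. h x \<le> c}" by auto
  ultimately show ?thesis using closedin_compact[OF assms(1)] by auto
qed

lemma zero_crossing_ratio_le:
  fixes f1 f2 h1 h2 m t :: real
  assumes "h1 > 0" "h2 < 0" "t = - h2 / (h1 - h2)" "m \<le> t * f1 + (1 - t) * f2"
  shows "(m - f1) / h1 \<le> (f2 - m) / (- h2)"
proof -
  have d: "h1 - h2 > 0" using assms by auto
  have t1: "t * (h1 - h2) = - h2" using d by (simp add: assms(3))
  then have t2: "(1 - t) * (h1 - h2) = h1" by (simp add: algebra_simps)
  have "m * (h1 - h2) \<le> (t * f1 + (1 - t) * f2) * (h1 - h2)"
    using assms(4) d by (simp add: mult_right_mono)
  also have "\<dots> = f1 * (t * (h1 - h2)) + f2 * ((1 - t) * (h1 - h2))"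
    by (simp add: algebra_simps)
  finally have "h1 * (m - f2) \<le> h2 * (m - f1)"
    unfolding t1 t2 by (simp add: algebra_simps)
  then show ?thesis using assms(1,2) by (simp add: divide_simps mult.commute)
qed

lemma multiplier_of_strictly_feasible:
  assumes mix: "mix_closed X mix" and f: "affine_along X mix f" and h: "affine_along X mix h"
    and x2: "x2 \<in> X" "h x2 < 0"
    and bnd: "\<And>x. x \<in> X \<Longrightarrow> h x \<le> 0 \<Longrightarrow> m \<le> f x"
  shows "\<exists>y\<ge>0. \<forall>x\<in>X. m \<le> f x + y * h x"
proof -
  have ratio: "(m - f x) / h x \<le> (f z - m) / (- h z)"
    if "x \<in> X" "h x > 0" "z \<in> X" "h z < 0" for x z
  proof -
    define t where "t = - h z / (h x - h z)"
    have t: "t \<in> {0..1}" using that by (auto simp: t_def divide_simps)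
    have "h (mix t x z) = t * h x + (1 - t) * h z" using h that t by (simp add: affine_along_def)
    also have "\<dots> = 0" using that by (simp add: t_def field_simps)
    finally have "m \<le> f (mix t x z)" using bnd mix that t by (simp add: mix_closed_def)
    also have "\<dots> = t * f x + (1 - t) * f z" using f that t by (simp add: affine_along_def)
    finally show ?thesis using zero_crossing_ratio_le that t_def by blast
  qed
  txt \<open>Every ratio \<open>(m - f x) / h x\<close> with \<open>h x > 0\<close> lies below every \<open>(f z - m) / (- h z)\<close> with
    \<open>h z < 0\<close>, so their supremum is a valid multiplier.\<close>
  define A where "A = insert 0 {(m - f x) / h x | x. x \<in> X \<and> h x > 0}"
  have bdd: "bdd_above A"
    unfolding A_def bdd_above_def
    by (rule exI[of _ "max 0 ((f x2 - m) / (- h x2))"]) (use ratio x2 in force)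
  define y where "y = Sup A"
  have y0: "y \<ge> 0" unfolding y_def by (rule cSup_upper[OF _ bdd]) (simp add: A_def)
  have "m \<le> f x + y * h x" if x: "x \<in> X" for x
  proof (cases "h x" "0::real" rule: linorder_cases)
    case less
    have "y \<le> (f x - m) / (- h x)" unfolding y_def
    proof (rule cSup_least)
      show "A \<noteq> {}" by (simp add: A_def)
      have "0 \<le> (f x - m) / (- h x)" using bnd[OF x] less by (intro divide_nonneg_nonneg) auto
      then show "a \<le> (f x - m) / (- h x)" if "a \<in> A" for a
        using that ratio[OF _ _ x less] by (auto simp: A_def)
    qed
    then have "y * (- h x) \<le> f x - m" using less by (simp add: divide_simps)
    then show ?thesis by (simp add: algebra_simps)
  next
    case equal
    then show ?thesis using bnd x by simp
  next
    case greater
    have "(m - f x) / h x \<le> y" unfolding y_def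
      by (rule cSup_upper[OF _ bdd]) (use x greater in \<open>auto simp: A_def\<close>)
    then have "m - f x \<le> y * h x" using greater by (simp add: divide_simps)
    then show ?thesis by simp
  qed
  then show ?thesis using y0 by blast
qed

lemma multiplier_of_nonneg_constraint:
  fixes f h :: "'x::topological_space \<Rightarrow> real"
  assumes X: "compact X" "X \<noteq> {}" and cf: "continuous_on X f" and ch: "continuous_on X h"
    and h_nonneg: "\<And>x. x \<in> X \<Longrightarrow> 0 \<le> h x"
    and bnd: "\<And>x. x \<in> X \<Longrightarrow> h x \<le> 0 \<Longrightarrow> m \<le> f x"
    and eps: "\<epsilon> > 0"
  shows "\<exists>y\<ge>0. \<forall>x\<in>X. m - \<epsilon> \<le> f x + y * h x"
proof -
  obtain xf where xf: "xf \<in> X" "\<And>z. z \<in> X \<Longrightarrow> f xf \<le> f z"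
    using continuous_attains_inf[OF X cf] by blast
  define K where "K = {x\<in>X. f x \<le> m - \<epsilon>}"
  show ?thesis
  proof (cases "K = {}")
    case True
    then have "\<forall>x\<in>X. m - \<epsilon> \<le> f x + 0 * h x" by (force simp: K_def)
    then show ?thesis by blast
  next
    case False
    have cK: "compact K" unfolding K_def by (rule compact_sublevel[OF X(1) cf])
    have hK: "continuous_on K h" using ch by (rule continuous_on_subset) (auto simp: K_def)
    obtain xk where xk: "xk \<in> K" "\<And>z. z \<in> K \<Longrightarrow> h xk \<le> h z"
      using continuous_attains_inf[OF cK False hK] by blast
    have xk_X: "xk \<in> X" and xk_f: "f xk \<le> m - \<epsilon>" using xk(1) by (auto simp: K_def)
    txt \<open>On the compact set where \<open>f\<close> drops below \<open>m - \<epsilon>\<close>, \<open>h\<close> is bounded away from \<open>0\<close>.\<close>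
    have \<delta>: "h xk > 0"
    proof (rule ccontr)
      assume "\<not> h xk > 0"
      then have "m \<le> f xk" using bnd[OF xk_X] by simp
      then show False using xk_f eps by linarith
    qed
    define y where "y = max 0 ((m - \<epsilon> - f xf) / h xk)"
    have "m - \<epsilon> \<le> f x + y * h x" if x: "x \<in> X" for x
    proof (cases "h x < h xk")
      case True
      then have "m - \<epsilon> < f x" using xk(2) x by (force simp: K_def)
      moreover have "0 \<le> y * h x" using h_nonneg[OF x] by (simp add: y_def)
      ultimately show ?thesis by linarith
    next
      case False
      then have "y * h xk \<le> y * h x" by (intro mult_left_mono) (auto simp: y_def)
      moreover have "m - \<epsilon> - f xf \<le> y * h xk"
        using \<delta> by (auto simp: y_def divide_simps max_def)
      ultimately show ?thesis using xf(2)[OF x] by linarith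
    qed
    then show ?thesis by (auto simp: y_def intro!: exI[of _ y])
  qed
qed

lemma lagrange_multiplier_approx:
  fixes f h :: "'x::topological_space \<Rightarrow> real"
  assumes X: "compact X" "X \<noteq> {}" "mix_closed X mix"
    and cf: "continuous_on X f" and ch: "continuous_on X h"
    and af: "affine_along X mix f" and ah: "affine_along X mix h"
    and bnd: "\<And>x. x \<in> X \<Longrightarrow> h x \<le> 0 \<Longrightarrow> m \<le> f x"
    and eps: "\<epsilon> > 0"
  shows "\<exists>y\<ge>0. \<forall>x\<in>X. m - \<epsilon> \<le> f x + y * h x"
proof (cases "\<exists>x\<in>X. h x < 0")
  case True
  then obtain x2 where "x2 \<in> X" "h x2 < 0" by blast
  then obtain y where "y \<ge> 0" "\<forall>x\<in>X. m \<le> f x + y * h x"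
    using multiplier_of_strictly_feasible[OF X(3) af ah _ _ bnd] by blast
  then show ?thesis using eps by (auto intro!: exI[of _ y] simp: order_trans[of _ m])
next
  case False
  then show ?thesis
    using multiplier_of_nonneg_constraint[OF X(1,2) cf ch _ bnd eps] by force
qed

lemma lagrange_multipliers_approx:
  fixes f :: "'x::topological_space \<Rightarrow> real" and h :: "'i \<Rightarrow> 'x \<Rightarrow> real"
  assumes "finite I"
    and "compact X" "mix_closed X mix" "x0 \<in> X" "\<And>i. i \<in> I \<Longrightarrow> h i x0 \<le> 0"
    and "continuous_on X f" "\<And>i. i \<in> I \<Longrightarrow> continuous_on X (h i)"
    and "affine_along X mix f" "\<And>i. i \<in> I \<Longrightarrow> affine_along X mix (h i)"
    and "\<And>x. x \<in> X \<Longrightarrow> \<forall>i\<in>I. h i x \<le> 0 \<Longrightarrow> m \<le> f x"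
    and "\<epsilon> > 0"
  shows "\<exists>y. (\<forall>i\<in>I. 0 \<le> y i) \<and> (\<forall>x\<in>X. m - \<epsilon> \<le> f x + (\<Sum>i\<in>I. y i * h i x))"
  using assms
proof (induction I arbitrary: X f m \<epsilon> rule: finite_induct)
  case empty
  then show ?case by (intro exI[of _ "\<lambda>_. 0"]) fastforce
next
  case (insert j I)
  note X = insert.prems(1-3) and x0 = insert.prems(4) and cf = insert.prems(5) and ch = insert.prems(6)
    and af = insert.prems(7) and ah = insert.prems(8) and bnd = insert.prems(9) and eps = insert.prems(10)
  txt \<open>Handle the constraints in \<open>I\<close> on the part of \<open>X\<close> where constraint \<open>j\<close> holds,
    then constraint \<open>j\<close> on all of \<open>X\<close>, each with error \<open>\<epsilon>/2\<close>.\<close>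
  define Xj where "Xj = {x\<in>X. h j x \<le> 0}"
  have "Xj \<subseteq> X" by (auto simp: Xj_def)
  have "\<exists>y. (\<forall>i\<in>I. 0 \<le> y i) \<and> (\<forall>x\<in>Xj. m - \<epsilon>/2 \<le> f x + (\<Sum>i\<in>I. y i * h i x))"
  proof (rule insert.IH)
    show "compact Xj" unfolding Xj_def using X(1) ch by (intro compact_sublevel) auto
    show "mix_closed Xj mix" unfolding Xj_def using X(2) ah by (intro mix_closed_sublevel) auto
    show "x0 \<in> Xj" using X(3) x0 by (auto simp: Xj_def)
  qed (use \<open>Xj \<subseteq> X\<close> x0 cf ch af ah bnd eps in
        \<open>auto simp: Xj_def intro: continuous_on_subset affine_along_subset\<close>)
  then obtain y where y: "\<forall>i\<in>I. 0 \<le> y i" "\<forall>x\<in>Xj. m - \<epsilon>/2 \<le> f x + (\<Sum>i\<in>I. y i * h i x)"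
    by blast
  define f' where "f' = (\<lambda>x. f x + (\<Sum>i\<in>I. y i * h i x))"
  have "\<exists>yj\<ge>0. \<forall>x\<in>X. (m - \<epsilon>/2) - \<epsilon>/2 \<le> f' x + yj * h j x"
  proof (rule lagrange_multiplier_approx)
    show "continuous_on X f'" unfolding f'_def using cf ch
      by (intro continuous_on_add continuous_on_sum continuous_on_mult continuous_on_const) auto
    show "affine_along X mix f'" unfolding f'_def using af ah by (intro affine_along_add_weighted_sum) auto
    show "m - \<epsilon>/2 \<le> f' x" if "x \<in> X" "h j x \<le> 0" for x
      using y(2) that by (auto simp: f'_def Xj_def)
  qed (use X x0 ch ah eps in auto)
  then obtain yj where yj: "yj \<ge> 0" "\<forall>x\<in>X. m - \<epsilon> \<le> f' x + yj * h j x" by auto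
  have "(\<Sum>i\<in>insert j I. (y(j := yj)) i * h i x) = yj * h j x + (\<Sum>i\<in>I. y i * h i x)" for x
    using insert.hyps by (auto intro!: sum.cong)
  then show ?case
    using y(1) yj by (intro exI[of _ "y(j := yj)"]) (auto simp: f'_def algebra_simps)
qed

section \<open>Lagrangian duality for the degree-bounded spanning tree LP\<close>

definition lagrangian :: "'e set \<Rightarrow> ('e \<Rightarrow> 'a set) \<Rightarrow> ('e \<Rightarrow> real) \<Rightarrow> 'a set set \<Rightarrow>
    ('a set \<Rightarrow> int) \<Rightarrow> real \<Rightarrow> ('a set \<Rightarrow> real) \<Rightarrow> ('e \<Rightarrow> real) \<Rightarrow> real" where
  "lagrangian E ends c \<S> b lam y x =
     (\<Sum>e\<in>E. cy E ends c \<S> y e * x e) - lam * (\<Sum>S\<in>\<S>. real_of_int (b S) * y S)"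

lemma g_lam_eq_Inf_lagrangian:
  "g_lam V E ends c \<S> b lam y = Inf (lagrangian E ends c \<S> b lam y ` PST V E ends)"
  unfolding g_lam_def lagrangian_def ..

lemma sum_cy_mult:
  assumes "finite E" and "finite \<S>"
  shows "(\<Sum>e\<in>E. cy E ends c \<S> y e * x e) =
           (\<Sum>e\<in>E. c e * x e) + (\<Sum>S\<in>\<S>. y S * sum x (delta E ends S))"
proof -
  have "(\<Sum>e\<in>E. cy E ends c \<S> y e * x e) =
        (\<Sum>e\<in>E. c e * x e) + (\<Sum>e\<in>E. \<Sum>S\<in>{S\<in>\<S>. e \<in> delta E ends S}. y S * x e)"
    unfolding cy_def by (simp add: distrib_right sum_distrib_right sum.distrib)
  also have "(\<Sum>e\<in>E. \<Sum>S\<in>{S\<in>\<S>. e \<in> delta E ends S}. y S * x e) =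
        (\<Sum>S\<in>\<S>. \<Sum>e\<in>{e\<in>E. e \<in> delta E ends S}. y S * x e)"
    by (rule sum.swap_restrict[OF assms])
  also have "\<dots> = (\<Sum>S\<in>\<S>. y S * sum x (delta E ends S))"
    by (simp add: delta_def sum_distrib_left)
  finally show ?thesis .
qed

lemma lagrangian_eq_penalized_cost:
  assumes "finite E" and "finite \<S>"
  shows "lagrangian E ends c \<S> b lam y x =
           (\<Sum>e\<in>E. c e * x e) + (\<Sum>S\<in>\<S>. y S * (sum x (delta E ends S) - lam * real_of_int (b S)))"
  unfolding lagrangian_def sum_cy_mult[OF assms]
  by (simp add: algebra_simps sum_subtractf sum_distrib_left)

lemma lagrangian_cong:
  "(\<And>e. e \<in> E \<Longrightarrow> x e = z e) \<Longrightarrow> lagrangian E ends c \<S> b lam y x = lagrangian E ends c \<S> b lam y z"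
  unfolding lagrangian_def by (metis (no_types, lifting) sum.cong)

lemma cost_le_cy:
  "(\<And>S. S \<in> \<S> \<Longrightarrow> 0 \<le> y S) \<Longrightarrow> c e \<le> cy E ends c \<S> y e"
  unfolding cy_def by (auto intro!: sum_nonneg)

lemma g_lam_le_lagrangian:
  assumes c: "\<forall>e\<in>E. 0 \<le> c e" and y: "\<forall>S\<in>\<S>. 0 \<le> y S" and x: "x \<in> PST V E ends"
  shows "g_lam V E ends c \<S> b lam y \<le> lagrangian E ends c \<S> b lam y x"
  unfolding g_lam_eq_Inf_lagrangian
proof (rule cInf_lower)
  show "bdd_below (lagrangian E ends c \<S> b lam y ` PST V E ends)"
  proof (rule bdd_belowI2)
    fix z assume z: "z \<in> PST V E ends"
    have "0 \<le> cy E ends c \<S> y e * z e" if "e \<in> E" for e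
    proof (rule mult_nonneg_nonneg)
      have "c e \<le> cy E ends c \<S> y e" by (rule cost_le_cy) (use y in blast)
      moreover have "0 \<le> c e" using c that by blast
      ultimately show "0 \<le> cy E ends c \<S> y e" by linarith
      show "0 \<le> z e" using z that unfolding PST_def by blast
    qed
    then have "0 \<le> (\<Sum>e\<in>E. cy E ends c \<S> y e * z e)" by (rule sum_nonneg)
    then show "- lam * (\<Sum>S\<in>\<S>. real_of_int (b S) * y S) \<le> lagrangian E ends c \<S> b lam y z"
      unfolding lagrangian_def by simp
  qed
qed (use x in blast)

text \<open>\<open>P_ST\<close> constrains only the coordinates in \<open>E\<close>; fixing the others to \<open>0\<close> makes it compact.\<close>

definition PST0 :: "'a set \<Rightarrow> 'e set \<Rightarrow> ('e \<Rightarrow> 'a set) \<Rightarrow> ('e \<Rightarrow> real) set" where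
  "PST0 V E ends = {x \<in> PST V E ends. \<forall>e. e \<notin> E \<longrightarrow> x e = 0}"

definition pmix :: "real \<Rightarrow> ('e \<Rightarrow> real) \<Rightarrow> ('e \<Rightarrow> real) \<Rightarrow> 'e \<Rightarrow> real" where
  "pmix t x z = (\<lambda>e. t * x e + (1 - t) * z e)"

lemma sum_pmix: "sum (pmix t x z) F = t * sum x F + (1 - t) * sum z F"
  unfolding pmix_def by (simp add: sum.distrib sum_distrib_left)

lemma affine_along_linear_form: "affine_along X pmix (\<lambda>x. \<Sum>e\<in>F. a e * x e)"
  unfolding affine_along_def pmix_def
  by (simp add: distrib_left sum.distrib sum_distrib_left mult.left_commute)

lemma affine_along_sum_minus: "affine_along X pmix (\<lambda>x. sum x F - r)"
  unfolding affine_along_def sum_pmix by (simp add: algebra_simps)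

lemma continuous_on_coordinate: "continuous_on A (\<lambda>x::'e \<Rightarrow> real. x e)"
  by (rule continuous_on_subset[OF continuous_on_product_coordinates]) simp

lemma PST0_restrict:
  assumes "x \<in> PST V E ends"
  shows "(\<lambda>e. if e \<in> E then x e else 0) \<in> PST0 V E ends"
proof -
  have "sum (\<lambda>e. if e \<in> E then x e else 0) F = sum x F" if "F \<subseteq> E" for F
    using that by (intro sum.cong) auto
  moreover have "Ein E ends S \<subseteq> E" for S by (auto simp: Ein_def)
  ultimately show ?thesis using assms unfolding PST0_def PST_def by auto
qed

lemma mix_closed_PST0: "mix_closed (PST0 V E ends) pmix"
  unfolding mix_closed_def
proof (intro ballI)
  fix x z and t :: real
  assume x: "x \<in> PST0 V E ends" and z: "z \<in> PST0 V E ends" and t: "t \<in> {0..1}"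
  have x': "\<forall>e\<in>E. 0 \<le> x e" "\<forall>S. S \<noteq> {} \<and> S \<subset> V \<longrightarrow> sum x (Ein E ends S) \<le> real (card S) - 1"
      "sum x E = real (card V) - 1" "\<forall>e. e \<notin> E \<longrightarrow> x e = 0"
    using x unfolding PST0_def PST_def by auto
  have z': "\<forall>e\<in>E. 0 \<le> z e" "\<forall>S. S \<noteq> {} \<and> S \<subset> V \<longrightarrow> sum z (Ein E ends S) \<le> real (card S) - 1"
      "sum z E = real (card V) - 1" "\<forall>e. e \<notin> E \<longrightarrow> z e = 0"
    using z unfolding PST0_def PST_def by auto
  have t': "0 \<le> t" "0 \<le> 1 - t" using t by auto
  show "pmix t x z \<in> PST0 V E ends"
    unfolding PST0_def PST_def mem_Collect_eq
  proof (intro conjI allI impI ballI)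
    show "0 \<le> pmix t x z e" if "e \<in> E" for e
      using x'(1) z'(1) t' that by (simp add: pmix_def)
    show "sum (pmix t x z) (Ein E ends S) \<le> real (card S) - 1" if "S \<noteq> {} \<and> S \<subset> V" for S
    proof -
      have "t * sum x (Ein E ends S) \<le> t * (real (card S) - 1)"
        using x'(2) that t' by (intro mult_left_mono) auto
      moreover have "(1 - t) * sum z (Ein E ends S) \<le> (1 - t) * (real (card S) - 1)"
        using z'(2) that t' by (intro mult_left_mono) auto
      ultimately show ?thesis unfolding sum_pmix by (simp add: algebra_simps)
    qed
    show "sum (pmix t x z) E = real (card V) - 1"
      unfolding sum_pmix x'(3) z'(3) by (simp add: algebra_simps)
    show "pmix t x z e = 0" if "e \<notin> E" for e
      using x'(4) z'(4) that by (simp add: pmix_def)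
  qed
qed

lemma compact_PST0:
  assumes "finite E"
  shows "compact (PST0 V E ends)"
proof -
  define B where "B = PiE UNIV (\<lambda>e. if e \<in> E then {0..real (card V)} else {0::real})"
  have "compactin (product_topology (\<lambda>_. euclidean) UNIV) B"
    unfolding B_def by (subst compactin_PiE) auto
  then have "compact B" by (simp add: euclidean_product_topology)
  moreover have "closed (PST0 V E ends)"
  proof -
    have "PST0 V E ends = (\<Inter>e\<in>E. {x. 0 \<le> x e}) \<inter>
       (\<Inter>S\<in>{S. S \<noteq> {} \<and> S \<subset> V}. {x. sum x (Ein E ends S) \<le> real (card S) - 1}) \<inter>
       {x. sum x E = real (card V) - 1} \<inter> (\<Inter>e\<in>- E. {x. x e = 0})"
      unfolding PST0_def PST_def by auto
    then show ?thesis
      by (simp only:) (intro closed_Int closed_INT ballI closed_Collect_le closed_Collect_eq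
          continuous_on_const continuous_on_coordinate continuous_on_sum)
  qed
  moreover have "PST0 V E ends \<subseteq> B"
  proof
    fix x assume x: "x \<in> PST0 V E ends"
    have "x e \<in> (if e \<in> E then {0..real (card V)} else {0})" for e
    proof (cases "e \<in> E")
      case True
      then have "x e \<le> sum x E"
        using assms x by (intro member_le_sum) (auto simp: PST0_def PST_def)
      then show ?thesis using True x by (auto simp: PST0_def PST_def)
    qed (use x in \<open>auto simp: PST0_def\<close>)
    then show "x \<in> B" unfolding B_def by auto
  qed
  ultimately show ?thesis by (metis compact_Int_closed inf.absorb2)
qed

lemma primal_optimum_approx_by_g_lam:
  assumes G: "graph V E ends" and fS: "finite \<S>"
    and xs_opt: "optimal_P V E ends c \<S> b lam xs" and eps: "\<epsilon> > 0"
  shows "\<exists>y. (\<forall>S\<in>\<S>. 0 \<le> y S) \<and> (\<Sum>e\<in>E. c e * xs e) - \<epsilon> \<le> g_lam V E ends c \<S> b lam y"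
proof -
  have fE: "finite E" using G unfolding graph_def by auto
  define OPT where "OPT = (\<Sum>e\<in>E. c e * xs e)"
  define h where "h = (\<lambda>S x. sum x (delta E ends S) - lam * real_of_int (b S))"
  define restr where "restr = (\<lambda>(x :: _ \<Rightarrow> real) e. if e \<in> E then x e else 0)"
  have xsP: "xs \<in> PST V E ends" and xs_h: "\<forall>S\<in>\<S>. h S xs \<le> 0"
    using xs_opt unfolding optimal_P_def feasible_P_def h_def by auto
  have restr_sum: "sum (restr x) (delta E ends S) = sum x (delta E ends S)" for x S
    unfolding restr_def delta_def by (intro sum.cong) auto
  obtain y where y: "\<forall>S\<in>\<S>. 0 \<le> y S"
    and approx: "\<forall>x\<in>PST0 V E ends. OPT - \<epsilon> \<le> (\<Sum>e\<in>E. c e * x e) + (\<Sum>S\<in>\<S>. y S * h S x)"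
  proof (atomize_elim, rule lagrange_multipliers_approx[OF fS compact_PST0[OF fE] mix_closed_PST0])
    show "restr xs \<in> PST0 V E ends" unfolding restr_def by (rule PST0_restrict[OF xsP])
    show "h S (restr xs) \<le> 0" if "S \<in> \<S>" for S
      using xs_h that unfolding h_def restr_sum by simp
    show "OPT \<le> (\<Sum>e\<in>E. c e * x e)" if "x \<in> PST0 V E ends" "\<forall>S\<in>\<S>. h S x \<le> 0" for x
      using that xs_opt unfolding optimal_P_def feasible_P_def PST0_def h_def OPT_def by auto
  qed (auto simp: h_def affine_along_linear_form affine_along_sum_minus eps
      intro!: continuous_on_sum continuous_on_mult continuous_on_diff continuous_on_const
        continuous_on_coordinate)
  have "OPT - \<epsilon> \<le> g_lam V E ends c \<S> b lam y"
    unfolding g_lam_eq_Inf_lagrangian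
  proof (rule cInf_greatest)
    show "lagrangian E ends c \<S> b lam y ` PST V E ends \<noteq> {}" using xsP by blast
    fix v assume "v \<in> lagrangian E ends c \<S> b lam y ` PST V E ends"
    then obtain x where x: "x \<in> PST V E ends" "v = lagrangian E ends c \<S> b lam y x" by blast
    have xr: "restr x \<in> PST0 V E ends" unfolding restr_def by (rule PST0_restrict[OF x(1)])
    have "OPT - \<epsilon> \<le> (\<Sum>e\<in>E. c e * restr x e) + (\<Sum>S\<in>\<S>. y S * h S (restr x))"
      using approx xr by blast
    also have "\<dots> = lagrangian E ends c \<S> b lam y (restr x)"
      unfolding lagrangian_eq_penalized_cost[OF fE fS] h_def ..
    also have "\<dots> = lagrangian E ends c \<S> b lam y x"
      by (rule lagrangian_cong) (simp add: restr_def)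
    finally show "OPT - \<epsilon> \<le> v" using x(2) by simp
  qed
  then show ?thesis using y unfolding OPT_def by blast
qed

lemma strong_duality:
  assumes G: "graph V E ends" and c: "\<forall>e\<in>E. 0 \<le> c e" and fS: "finite \<S>"
    and xs_opt: "optimal_P V E ends c \<S> b lam xs"
    and ys_opt: "optimal_dual V E ends c \<S> b lam ys"
  shows "(\<Sum>e\<in>E. cy E ends c \<S> ys e * xs e) =
           (\<Sum>e\<in>E. c e * xs e) + lam * (\<Sum>S\<in>\<S>. real_of_int (b S) * ys S)"
    and "x \<in> PST V E ends \<Longrightarrow> (\<Sum>e\<in>E. cy E ends c \<S> ys e * xs e) \<le> (\<Sum>e\<in>E. cy E ends c \<S> ys e * x e)"
proof -
  have fE: "finite E" using G unfolding graph_def by auto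
  define OPT where "OPT = (\<Sum>e\<in>E. c e * xs e)"
  define L where "L = lagrangian E ends c \<S> b lam ys"
  have ys: "\<forall>S\<in>\<S>. 0 \<le> ys S" using ys_opt unfolding optimal_dual_def by blast
  have xsP: "xs \<in> PST V E ends" and xs_feas: "\<forall>S\<in>\<S>. sum xs (delta E ends S) \<le> lam * b S"
    using xs_opt unfolding optimal_P_def feasible_P_def by auto
  have approx: "OPT - \<epsilon> \<le> g_lam V E ends c \<S> b lam ys" if eps: "\<epsilon> > 0" for \<epsilon>
  proof -
    obtain y where y: "\<forall>S\<in>\<S>. 0 \<le> y S" and "OPT - \<epsilon> \<le> g_lam V E ends c \<S> b lam y"
      using primal_optimum_approx_by_g_lam[OF G fS xs_opt eps] unfolding OPT_def by blast
    moreover have "g_lam V E ends c \<S> b lam y \<le> g_lam V E ends c \<S> b lam ys"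
      using ys_opt y unfolding optimal_dual_def by blast
    ultimately show ?thesis by linarith
  qed
  have OPT_le_g: "OPT \<le> g_lam V E ends c \<S> b lam ys"
  proof (rule field_le_epsilon)
    fix \<epsilon> :: real assume "0 < \<epsilon>"
    then show "OPT \<le> g_lam V E ends c \<S> b lam ys + \<epsilon>" using approx by fastforce
  qed
  have "(\<Sum>S\<in>\<S>. ys S * (sum xs (delta E ends S) - lam * real_of_int (b S))) \<le> 0"
    using ys xs_feas by (intro sum_nonpos) (simp add: mult_nonneg_nonpos)
  then have "L xs \<le> OPT"
    unfolding L_def lagrangian_eq_penalized_cost[OF fE fS] OPT_def by simp
  moreover have g_le: "g_lam V E ends c \<S> b lam ys \<le> L x" if "x \<in> PST V E ends" for x
    unfolding L_def by (rule g_lam_le_lagrangian[OF c ys that])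
  ultimately have L_xs: "L xs = OPT" using OPT_le_g g_le[OF xsP] by linarith
  then show "(\<Sum>e\<in>E. cy E ends c \<S> ys e * xs e) =
      (\<Sum>e\<in>E. c e * xs e) + lam * (\<Sum>S\<in>\<S>. real_of_int (b S) * ys S)"
    unfolding L_def lagrangian_def OPT_def by simp
  show "(\<Sum>e\<in>E. cy E ends c \<S> ys e * xs e) \<le> (\<Sum>e\<in>E. cy E ends c \<S> ys e * x e)"
    if "x \<in> PST V E ends"
    using g_le[OF that] OPT_le_g L_xs unfolding L_def lagrangian_def by simp
qed

section \<open>Edges inside the members of a laminar family\<close>

lemma children_subset_Pow: "children F L \<subseteq> Pow L"
  unfolding children_def by auto

lemma finite_children: "finite L \<Longrightarrow> finite (children F L)"
  using children_subset_Pow by (metis finite_Pow_iff finite_subset)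

lemma children_disjoint:
  assumes "laminar F" "C1 \<in> children F L" "C2 \<in> children F L" "C1 \<noteq> C2"
  shows "C1 \<inter> C2 = {}"
proof -
  have c1: "C1 \<in> F" "C1 \<subset> L" "\<not> (\<exists>D\<in>F. C1 \<subset> D \<and> D \<subset> L)"
    and c2: "C2 \<in> F" "C2 \<subset> L" "\<not> (\<exists>D\<in>F. C2 \<subset> D \<and> D \<subset> L)"
    using assms(2,3) by (auto simp: children_def)
  have "C1 \<subseteq> C2 \<or> C2 \<subseteq> C1 \<or> C1 \<inter> C2 = {}"
    using assms(1) c1(1) c2(1) unfolding laminar_def by blast
  then show ?thesis using c1 c2 assms(4) by blast
qed

lemma child_above:
  assumes "finite L" "D \<in> F" "D \<subset> L"
  obtains C where "C \<in> children F L" "D \<subseteq> C"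
proof -
  define M where "M = {C\<in>F. D \<subseteq> C \<and> C \<subset> L}"
  have "finite M" using assms(1) by (intro finite_subset[of M "Pow L"]) (auto simp: M_def)
  moreover have "D \<in> M" using assms by (auto simp: M_def)
  ultimately obtain C where C: "C \<in> M" "\<forall>C'\<in>M. C \<subseteq> C' \<longrightarrow> C = C'"
    using finite_has_maximal[of M] by blast
  then have "C \<in> children F L" unfolding children_def by (auto simp: M_def)
  then show ?thesis using that C by (auto simp: M_def)
qed

lemma cls_child:
  assumes "laminar F" "C \<in> children F L" "v \<in> C"
  shows "cls F L v = C"
proof -
  have "(THE C. C \<in> children F L \<and> v \<in> C) = C"
    by (rule the_equality) (use assms children_disjoint in blast)+
  then show ?thesis using assms unfolding cls_def by auto
qed

lemma cls_no_child: "\<not> (\<exists>C\<in>children F L. v \<in> C) \<Longrightarrow> cls F L v = {v}"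
  unfolding cls_def by auto

lemma contr_nodes_eq:
  assumes lam: "laminar F" and ne: "\<forall>A\<in>F. A \<noteq> {}"
  shows "contr_nodes F L = children F L \<union> (\<lambda>v. {v}) ` (L - \<Union>(children F L))"
proof (intro equalityI subsetI)
  fix N assume "N \<in> contr_nodes F L"
  then obtain v where v: "v \<in> L" "N = cls F L v" unfolding contr_nodes_def by auto
  show "N \<in> children F L \<union> (\<lambda>v. {v}) ` (L - \<Union>(children F L))"
  proof (cases "\<exists>C\<in>children F L. v \<in> C")
    case True
    then show ?thesis using cls_child[OF lam] v by auto
  next
    case False
    then show ?thesis using cls_no_child[OF False] v by auto
  qed
next
  fix N assume N: "N \<in> children F L \<union> (\<lambda>v. {v}) ` (L - \<Union>(children F L))"
  show "N \<in> contr_nodes F L"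
  proof (cases "N \<in> children F L")
    case True
    then have "N \<in> F" by (simp add: children_def)
    then obtain v where v: "v \<in> N" using ne by blast
    then have "cls F L v = N" by (rule cls_child[OF lam True])
    moreover have "v \<in> L" using True v children_subset_Pow by blast
    ultimately show ?thesis unfolding contr_nodes_def by blast
  next
    case False
    then obtain v where v: "v \<in> L - \<Union>(children F L)" "N = {v}" using N by blast
    then have "cls F L v = N" using cls_no_child[of F L v] by blast
    then show ?thesis unfolding contr_nodes_def using v by blast
  qed
qed

lemma card_contr_nodes:
  assumes lam: "laminar F" and ne: "\<forall>A\<in>F. A \<noteq> {}" and fin: "finite L"
  shows "real (card (contr_nodes F L)) - 1 + (\<Sum>C\<in>children F L. real (card C) - 1) =
           real (card L) - 1"
proof -
  define ch where "ch = children F L"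
  define U where "U = L - \<Union>ch"
  have fin_ch: "finite ch" unfolding ch_def by (rule finite_children[OF fin])
  have ch_L: "C \<subseteq> L" if "C \<in> ch" for C using that children_subset_Pow unfolding ch_def by blast
  have fin_C: "finite C" if "C \<in> ch" for C using ch_L[OF that] fin by (rule finite_subset)
  have fin_U: "finite U" using fin unfolding U_def by simp
  have "card (contr_nodes F L) = card ch + card ((\<lambda>v. {v}) ` U)"
    unfolding contr_nodes_eq[OF lam ne] ch_def[symmetric] U_def[symmetric]
    by (rule card_Un_disjoint) (use fin_ch fin_U in \<open>auto simp: U_def\<close>)
  also have "card ((\<lambda>v. {v}) ` U) = card U" by (rule card_image) (auto simp: inj_on_def)
  finally have nodes: "card (contr_nodes F L) = card ch + card U" .
  have "card (\<Union>ch) = sum card ch"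
    by (rule card_Union_disjoint)
      (use children_disjoint[OF lam] fin_C in \<open>auto simp: pairwise_def disjnt_def ch_def\<close>)
  moreover have "card L = card (\<Union>ch) + card U"
  proof -
    have "L = \<Union>ch \<union> U" using ch_L U_def by auto
    then show ?thesis using fin_U fin_ch fin_C
      by (metis U_def Diff_disjoint card_Un_disjoint finite_Union inf_commute)
  qed
  ultimately have "card L = sum card ch + card U" by simp
  then show ?thesis using nodes unfolding ch_def by (simp add: sum_subtractf)
qed

lemma members_below_eq:
  assumes "finite L" and "L \<in> F"
  shows "{L0\<in>F. L0 \<subseteq> L} = insert L (\<Union>C\<in>children F L. {L0\<in>F. L0 \<subseteq> C})"
proof (intro equalityI subsetI)
  fix L0 assume L0: "L0 \<in> {L0\<in>F. L0 \<subseteq> L}"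
  show "L0 \<in> insert L (\<Union>C\<in>children F L. {L0\<in>F. L0 \<subseteq> C})"
  proof (cases "L0 = L")
    case False
    then obtain C where "C \<in> children F L" "L0 \<subseteq> C"
      using child_above[OF assms(1)] L0 by blast
    then show ?thesis using L0 by blast
  qed simp
qed (use assms(2) children_subset_Pow in blast)

lemma sum_card_contr_nodes_below:
  assumes lam: "laminar F" and ne: "\<forall>A\<in>F. A \<noteq> {}" and fin: "\<forall>A\<in>F. finite A" and L: "L \<in> F"
  shows "(\<Sum>L0\<in>{L0\<in>F. L0 \<subseteq> L}. real (card (contr_nodes F L0)) - 1) = real (card L) - 1"
  using L
proof (induction "card L" arbitrary: L rule: less_induct)
  case less
  define g where "g = (\<lambda>L0. real (card (contr_nodes F L0)) - 1)"
  define ch where "ch = children F L"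
  have fin_L: "finite L" using fin less.prems by blast
  have fin_ch: "finite ch" unfolding ch_def by (rule finite_children[OF fin_L])
  have ch: "C \<in> F" "C \<subset> L" if "C \<in> ch" for C using that by (auto simp: ch_def children_def)
  have fin_below: "finite {L0\<in>F. L0 \<subseteq> C}" if "C \<in> F" for C
    by (rule finite_subset[of _ "Pow C"]) (use fin that in auto)
  have "sum g (\<Union>C\<in>ch. {L0\<in>F. L0 \<subseteq> C}) = (\<Sum>C\<in>ch. sum g {L0\<in>F. L0 \<subseteq> C})"
  proof (rule sum.UNION_disjoint[OF fin_ch])
    show "\<forall>C\<in>ch. finite {L0\<in>F. L0 \<subseteq> C}" using fin_below ch by blast
    show "\<forall>C1\<in>ch. \<forall>C2\<in>ch. C1 \<noteq> C2 \<longrightarrow> {L0\<in>F. L0 \<subseteq> C1} \<inter> {L0\<in>F. L0 \<subseteq> C2} = {}"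
    proof (intro ballI impI)
      fix C1 C2 assume "C1 \<in> ch" "C2 \<in> ch" "C1 \<noteq> C2"
      then have "C1 \<inter> C2 = {}" unfolding ch_def by (rule children_disjoint[OF lam])
      then show "{L0\<in>F. L0 \<subseteq> C1} \<inter> {L0\<in>F. L0 \<subseteq> C2} = {}" using ne by blast
    qed
  qed
  also have "\<dots> = (\<Sum>C\<in>ch. real (card C) - 1)"
  proof (rule sum.cong[OF refl])
    fix C assume C: "C \<in> ch"
    have "card C < card L" by (rule psubset_card_mono[OF fin_L ch(2)[OF C]])
    then show "sum g {L0\<in>F. L0 \<subseteq> C} = real (card C) - 1"
      unfolding g_def by (rule less.hyps[OF _ ch(1)[OF C]])
  qed
  finally have children_sum: "sum g (\<Union>C\<in>ch. {L0\<in>F. L0 \<subseteq> C}) = (\<Sum>C\<in>ch. real (card C) - 1)" .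
  have "sum g {L0\<in>F. L0 \<subseteq> L} = g L + sum g (\<Union>C\<in>ch. {L0\<in>F. L0 \<subseteq> C})"
    unfolding members_below_eq[OF fin_L less.prems] ch_def[symmetric]
    by (rule sum.insert) (use fin_ch fin_below ch in auto)
  also have "\<dots> = real (card L) - 1"
    using card_contr_nodes[OF lam ne fin_L] children_sum unfolding g_def ch_def by simp
  finally show ?case unfolding g_def .
qed

lemma contr_edge_not_inside_member:
  assumes "finite L2" "L1 \<in> F" "L1 \<subset> L2" "e \<in> contr_edges E ends F L2"
  shows "\<not> ends e \<subseteq> L1"
proof
  assume "ends e \<subseteq> L1"
  moreover obtain C where "C \<in> children F L2" "L1 \<subseteq> C" using child_above[OF assms(1-3)] .
  ultimately show False using assms(4) unfolding contr_edges_def by blast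
qed

lemma contr_edge_inside_iff:
  assumes lam: "laminar F" and fin: "\<forall>A\<in>F. finite A" and nonloop: "\<forall>e\<in>E. ends e \<noteq> {}"
    and L: "L \<in> F" and L0: "L0 \<in> F" and e: "e \<in> contr_edges E ends F L0"
  shows "ends e \<subseteq> L \<longleftrightarrow> L0 \<subseteq> L"
proof
  have e0: "ends e \<subseteq> L0" "e \<in> E" using e unfolding contr_edges_def Ein_def by auto
  assume eL: "ends e \<subseteq> L"
  then have "L0 \<inter> L \<noteq> {}" using e0 nonloop by blast
  then have "L0 \<subseteq> L \<or> L \<subset> L0" using lam L L0 unfolding laminar_def by blast
  then show "L0 \<subseteq> L" using contr_edge_not_inside_member[OF _ L _ e] eL fin L0 by blast
qed (use e in \<open>auto simp: contr_edges_def Ein_def\<close>)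

lemma contr_edges_disjoint:
  assumes lam: "laminar F" and fin: "\<forall>A\<in>F. finite A" and nonloop: "\<forall>e\<in>E. ends e \<noteq> {}"
    and L: "L1 \<in> F" "L2 \<in> F" "L1 \<noteq> L2"
  shows "contr_edges E ends F L1 \<inter> contr_edges E ends F L2 = {}"
proof -
  have "L1 \<subseteq> L2" "L2 \<subseteq> L1" if "e \<in> contr_edges E ends F L1" "e \<in> contr_edges E ends F L2" for e
    using contr_edge_inside_iff[OF lam fin nonloop L(2,1) that(1)]
      contr_edge_inside_iff[OF lam fin nonloop L(1,2) that(2)] that
    by (auto simp: contr_edges_def Ein_def)
  then show ?thesis using L(3) by blast
qed

lemma card_edges_inside_member:
  assumes lam: "laminar F" and ne: "\<forall>A\<in>F. A \<noteq> {}" and fin: "\<forall>A\<in>F. finite A"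
    and nonloop: "\<forall>e\<in>E. ends e \<noteq> {}"
    and TL: "\<forall>L0\<in>F. TL L0 \<subseteq> contr_edges E ends F L0 \<and> finite (TL L0) \<and>
               card (TL L0) + 1 = card (contr_nodes F L0)"
    and L: "L \<in> F"
  shows "real (card ((\<Union>L0\<in>F. TL L0) \<inter> Ein E ends L)) = real (card L) - 1"
proof -
  define below where "below = {L0\<in>F. L0 \<subseteq> L}"
  have TL_contr: "e \<in> contr_edges E ends F L0" if "L0 \<in> F" "e \<in> TL L0" for L0 e
    using TL that by blast
  have "(\<Union>L0\<in>F. TL L0) \<inter> Ein E ends L = (\<Union>L0\<in>below. TL L0)"
  proof (intro equalityI subsetI)
    fix e assume "e \<in> (\<Union>L0\<in>F. TL L0) \<inter> Ein E ends L"
    then obtain L0 where L0: "L0 \<in> F" "e \<in> TL L0" "ends e \<subseteq> L" by (auto simp: Ein_def)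
    then have "L0 \<subseteq> L" using contr_edge_inside_iff[OF lam fin nonloop L L0(1) TL_contr] by blast
    then show "e \<in> (\<Union>L0\<in>below. TL L0)" using L0 by (auto simp: below_def)
  next
    fix e assume "e \<in> (\<Union>L0\<in>below. TL L0)"
    then obtain L0 where L0: "L0 \<in> F" "L0 \<subseteq> L" "e \<in> TL L0" by (auto simp: below_def)
    then show "e \<in> (\<Union>L0\<in>F. TL L0) \<inter> Ein E ends L"
      using TL_contr[OF L0(1,3)] by (auto simp: contr_edges_def Ein_def)
  qed
  moreover have "card (\<Union>L0\<in>below. TL L0) = (\<Sum>L0\<in>below. card (TL L0))"
  proof (rule card_UN_disjoint)
    show "finite below" unfolding below_def by (rule finite_subset[of _ "Pow L"]) (use fin L in auto)
    show "\<forall>L0\<in>below. finite (TL L0)" using TL by (auto simp: below_def)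
    show "\<forall>L1\<in>below. \<forall>L2\<in>below. L1 \<noteq> L2 \<longrightarrow> TL L1 \<inter> TL L2 = {}"
    proof (intro ballI impI)
      fix L1 L2 assume "L1 \<in> below" "L2 \<in> below" "L1 \<noteq> L2"
      then have "contr_edges E ends F L1 \<inter> contr_edges E ends F L2 = {}"
        by (intro contr_edges_disjoint[OF lam fin nonloop]) (auto simp: below_def)
      then show "TL L1 \<inter> TL L2 = {}" using TL \<open>L1 \<in> below\<close> \<open>L2 \<in> below\<close> by (auto simp: below_def)
    qed
  qed
  moreover have "(\<Sum>L0\<in>below. real (card (TL L0))) = (\<Sum>L0\<in>below. real (card (contr_nodes F L0)) - 1)"
    using TL by (intro sum.cong) (auto simp: below_def)
  ultimately show ?thesis
    using sum_card_contr_nodes_below[OF lam ne fin L] unfolding below_def by simp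
qed

section \<open>Tight sets of laminar decompositions\<close>

lemma Ein_V: "graph V E ends \<Longrightarrow> Ein E ends V = E"
  unfolding graph_def Ein_def by auto

lemma PST_nonneg: "x \<in> PST V E ends \<Longrightarrow> e \<in> E \<Longrightarrow> 0 \<le> x e"
  unfolding PST_def by auto

lemma PST_Ein_le:
  assumes "graph V E ends" "x \<in> PST V E ends" "A \<noteq> {}" "A \<subseteq> V"
  shows "sum x (Ein E ends A) \<le> real (card A) - 1"
proof (cases "A = V")
  case True
  then show ?thesis using assms(2) Ein_V[OF assms(1)] unfolding PST_def by simp
qed (use assms in \<open>auto simp: PST_def\<close>)

definition crossing_edges :: "'e set \<Rightarrow> ('e \<Rightarrow> 'a set) \<Rightarrow> 'a set \<Rightarrow> 'a set \<Rightarrow> 'e set" where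
  "crossing_edges E ends S L = {e\<in>E. ends e \<subseteq> S \<union> L \<and> \<not> ends e \<subseteq> S \<and> \<not> ends e \<subseteq> L}"

lemma sum_Ein_union_inter:
  fixes g :: "'e \<Rightarrow> real"
  assumes "finite E"
  shows "sum g (Ein E ends (S \<union> L)) + sum g (Ein E ends (S \<inter> L)) =
         sum g (Ein E ends S) + sum g (Ein E ends L) + sum g (crossing_edges E ends S L)"
proof -
  have fin: "finite (Ein E ends X)" for X using assms by (simp add: Ein_def)
  have fC: "finite (crossing_edges E ends S L)" using assms by (simp add: crossing_edges_def)
  have "Ein E ends (S \<union> L) = (Ein E ends S \<union> Ein E ends L) \<union> crossing_edges E ends S L"
    unfolding Ein_def crossing_edges_def by auto
  moreover have "(Ein E ends S \<union> Ein E ends L) \<inter> crossing_edges E ends S L = {}"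
    unfolding Ein_def crossing_edges_def by auto
  ultimately have "sum g (Ein E ends (S \<union> L)) =
      sum g (Ein E ends S \<union> Ein E ends L) + sum g (crossing_edges E ends S L)"
    using fin fC by (simp add: sum.union_disjoint)
  moreover have "Ein E ends S \<inter> Ein E ends L = Ein E ends (S \<inter> L)"
    unfolding Ein_def by auto
  ultimately show ?thesis using sum_Un[OF fin fin, of g S L] by simp
qed

text \<open>The constraints of \<open>S \<union> L\<close> and \<open>S \<inter> L\<close> add up to those of \<open>S\<close> and \<open>L\<close> plus the weight of
  the edges crossing between \<open>S - L\<close> and \<open>L - S\<close>.\<close>

lemma tight_union_inter:
  assumes G: "graph V E ends" and x: "x \<in> PST V E ends"
    and S: "tight V E ends x S" and L: "tight V E ends x L" and SL: "S \<inter> L \<noteq> {}"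
  shows "tight V E ends x (S \<union> L)" "tight V E ends x (S \<inter> L)"
    and "\<forall>e\<in>crossing_edges E ends S L. x e = 0"
proof -
  have fE: "finite E" and fV: "finite V" using G unfolding graph_def by auto
  have S': "S \<subseteq> V" "S \<noteq> {}" "sum x (Ein E ends S) = real (card S) - 1"
    and L': "L \<subseteq> V" "L \<noteq> {}" "sum x (Ein E ends L) = real (card L) - 1"
    using S L unfolding tight_def by auto
  have union: "sum x (Ein E ends (S \<union> L)) \<le> real (card (S \<union> L)) - 1"
    by (rule PST_Ein_le[OF G x]) (use S' L' in auto)
  have inter: "sum x (Ein E ends (S \<inter> L)) \<le> real (card (S \<inter> L)) - 1"
    by (rule PST_Ein_le[OF G x]) (use S' L' SL in auto)
  have "card (S \<union> L) + card (S \<inter> L) = card S + card L"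
    using card_Un_Int[of S L] fV S'(1) L'(1) finite_subset by metis
  then have card: "real (card (S \<union> L)) + real (card (S \<inter> L)) = real (card S) + real (card L)"
    by (metis of_nat_add)
  have fC: "finite (crossing_edges E ends S L)" using fE by (simp add: crossing_edges_def)
  have nonneg: "\<forall>e\<in>crossing_edges E ends S L. 0 \<le> x e"
    using PST_nonneg[OF x] by (simp add: crossing_edges_def)
  then have "0 \<le> sum x (crossing_edges E ends S L)" by (simp add: sum_nonneg)
  note sums = sum_Ein_union_inter[OF fE, where g = x and ends = ends and S = S and L = L]
  have cross0: "sum x (crossing_edges E ends S L) = 0"
    and "sum x (Ein E ends (S \<union> L)) = real (card (S \<union> L)) - 1"
    and "sum x (Ein E ends (S \<inter> L)) = real (card (S \<inter> L)) - 1"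
    using union inter sums card S'(3) L'(3) \<open>0 \<le> sum x (crossing_edges E ends S L)\<close> by linarith+
  then show "tight V E ends x (S \<union> L)" "tight V E ends x (S \<inter> L)"
    using S' L' SL unfolding tight_def by auto
  show "\<forall>e\<in>crossing_edges E ends S L. x e = 0"
    using cross0 sum_nonneg_eq_0_iff[OF fC] nonneg by blast
qed

definition crosses :: "'a set \<Rightarrow> 'a set \<Rightarrow> bool" where
  "crosses L S \<longleftrightarrow> L \<inter> S \<noteq> {} \<and> \<not> L \<subseteq> S \<and> \<not> S \<subseteq> L"

lemma laminar_insert_noncrossing:
  "laminar \<L> \<Longrightarrow> \<not> (\<exists>L\<in>\<L>. crosses L S) \<Longrightarrow> laminar (insert S \<L>)"
  unfolding laminar_def crosses_def by blast

lemma crossing_members_inter_subset: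
  assumes "laminar \<L>" "L \<in> \<L>" "crosses L S"
  shows "{L'\<in>\<L>. crosses L' (S \<inter> L)} \<subset> {L'\<in>\<L>. crosses L' S}"
proof -
  have "L' \<subseteq> L \<or> L \<subseteq> L' \<or> L' \<inter> L = {}" if "L' \<in> \<L>" for L'
    using assms(1,2) that unfolding laminar_def by blast
  then show ?thesis using assms(2,3) unfolding crosses_def by blast
qed

lemma crossing_members_union_subset:
  assumes "laminar \<L>" "L \<in> \<L>" "crosses L S"
  shows "{L'\<in>\<L>. crosses L' (S \<union> L)} \<subset> {L'\<in>\<L>. crosses L' S}"
proof -
  have "L' \<subseteq> L \<or> L \<subseteq> L' \<or> L' \<inter> L = {}" if "L' \<in> \<L>" for L'
    using assms(1,2) that unfolding laminar_def by blast
  then show ?thesis using assms(2,3) unfolding crosses_def by blast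
qed

text \<open>Induction on the number of members crossing \<open>S\<close>: uncross \<open>S\<close> with one of them. Since no edge
  of \<open>T \<subseteq> supp x\<close> crosses, the edge counts of \<open>T\<close> obey the same identity as the constraints.\<close>

lemma tight_set_spanned:
  assumes G: "graph V E ends" and dec: "laminar_decomp V E ends x \<L>"
    and T_supp: "\<forall>e\<in>T. x e > 0"
    and T_inside: "\<forall>L\<in>\<L>. real (card (T \<inter> Ein E ends L)) = real (card L) - 1"
    and S: "tight V E ends x S"
  shows "real (card S) - 1 \<le> real (card (T \<inter> Ein E ends S))"
  using S
proof (induction "card {L\<in>\<L>. crosses L S}" arbitrary: S rule: less_induct)
  case less
  have fE: "finite E" and fV: "finite V" using G unfolding graph_def by auto
  have x: "x \<in> PST V E ends" and lam: "laminar \<L>" and tight_L: "\<forall>A\<in>\<L>. tight V E ends x A"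
    and maximal: "\<forall>\<L>'. \<L> \<subseteq> \<L>' \<and> laminar \<L>' \<and> (\<forall>A\<in>\<L>'. tight V E ends x A) \<longrightarrow> \<L>' = \<L>"
    using dec unfolding laminar_decomp_def by auto
  show ?case
  proof (cases "\<exists>L\<in>\<L>. crosses L S")
    case False
    then have "insert S \<L> = \<L>"
      using maximal laminar_insert_noncrossing[OF lam] tight_L less.prems by blast
    then have "S \<in> \<L>" by blast
    then show ?thesis using T_inside by simp
  next
    case True
    then obtain L where L: "L \<in> \<L>" "crosses L S" by blast
    have fin_cross: "finite {L\<in>\<L>. crosses L S}"
      by (rule finite_subset[of _ "Pow V"]) (use tight_L fV in \<open>auto simp: tight_def\<close>)
    have tL: "tight V E ends x L" using tight_L L(1) by blast
    have SL: "S \<inter> L \<noteq> {}" using L(2) unfolding crosses_def by blast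
    note uncross = tight_union_inter[OF G x less.prems tL SL]
    have IH_inter: "real (card (S \<inter> L)) - 1 \<le> real (card (T \<inter> Ein E ends (S \<inter> L)))"
      using less.hyps[OF psubset_card_mono[OF fin_cross crossing_members_inter_subset[OF lam L]]]
        uncross(2) by blast
    have IH_union: "real (card (S \<union> L)) - 1 \<le> real (card (T \<inter> Ein E ends (S \<union> L)))"
      using less.hyps[OF psubset_card_mono[OF fin_cross crossing_members_union_subset[OF lam L]]]
        uncross(1) by blast
    define g where "g = (\<lambda>e. of_bool (e \<in> T) :: real)"
    have g_Ein: "sum g (Ein E ends A) = real (card (T \<inter> Ein E ends A))" for A
      using fE unfolding g_def by (simp add: Ein_def Int_commute)
    have "sum g (crossing_edges E ends S L) = 0"
      using uncross(3) T_supp unfolding g_def by (fastforce intro: sum.neutral)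
    moreover have "real (card (S \<union> L)) + real (card (S \<inter> L)) = real (card S) + real (card L)"
      using card_Un_Int[of S L] fV less.prems tL finite_subset unfolding tight_def
      by (metis of_nat_add)
    ultimately show ?thesis
      using sum_Ein_union_inter[OF fE, where g = g and ends = ends and S = S and L = L]
        IH_inter IH_union T_inside[rule_format, OF L(1)]
      unfolding g_Ein by linarith
  qed
qed

lemma V_mem_laminar_decomp:
  assumes G: "graph V E ends" and dec: "laminar_decomp V E ends x \<L>"
  shows "V \<in> \<L>"
proof -
  have x: "x \<in> PST V E ends" and lam: "laminar \<L>" and tight_L: "\<forall>A\<in>\<L>. tight V E ends x A"
    and maximal: "\<forall>\<L>'. \<L> \<subseteq> \<L>' \<and> laminar \<L>' \<and> (\<forall>A\<in>\<L>'. tight V E ends x A) \<longrightarrow> \<L>' = \<L>"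
    using dec unfolding laminar_decomp_def by auto
  have sum_E: "sum x E = real (card V) - 1" using x unfolding PST_def by blast
  have "V \<noteq> {}"
  proof
    assume "V = {}"
    moreover have "0 \<le> sum x E" using PST_nonneg[OF x] by (simp add: sum_nonneg)
    ultimately show False using sum_E by simp
  qed
  then have "tight V E ends x V" unfolding tight_def Ein_V[OF G] using sum_E by simp
  moreover have "laminar (insert V \<L>)"
    using lam tight_L unfolding laminar_def tight_def by blast
  ultimately have "insert V \<L> = \<L>" using maximal tight_L by blast
  then show ?thesis by blast
qed

lemma card_edges_inside_laminar_decomp:
  assumes G: "graph V E ends" and dec: "laminar_decomp V E ends x \<L>"
    and TL: "\<forall>L0\<in>\<L>. TL L0 \<subseteq> contr_edges E ends \<L> L0 \<and> finite (TL L0) \<and>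
               card (TL L0) + 1 = card (contr_nodes \<L> L0)"
    and L: "L \<in> \<L>"
  shows "real (card ((\<Union>L0\<in>\<L>. TL L0) \<inter> Ein E ends L)) = real (card L) - 1"
proof (rule card_edges_inside_member[OF _ _ _ _ TL L])
  have tight_L: "\<forall>A\<in>\<L>. tight V E ends x A" using dec unfolding laminar_decomp_def by blast
  show "laminar \<L>" using dec unfolding laminar_decomp_def by blast
  show "\<forall>A\<in>\<L>. A \<noteq> {}" using tight_L unfolding tight_def by blast
  show "\<forall>A\<in>\<L>. finite A"
  proof
    fix A assume "A \<in> \<L>"
    then have "A \<subseteq> V" using tight_L unfolding tight_def by blast
    moreover have "finite V" using G unfolding graph_def by blast
    ultimately show "finite A" by (rule finite_subset)
  qed
  show "\<forall>e\<in>E. ends e \<noteq> {}"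
  proof
    fix e assume "e \<in> E"
    then have "card (ends e) = 2" using G unfolding graph_def by blast
    then show "ends e \<noteq> {}" by auto
  qed
qed

section \<open>Perturbing towards a tree\<close>

lemma sum_perturbed:
  assumes "finite A"
  shows "(\<Sum>e\<in>A. (1 + \<epsilon>) * x e - \<epsilon> * of_bool (e \<in> T)) =
           (1 + \<epsilon>) * sum x A - \<epsilon> * real (card (T \<inter> A))"
  using assms by (simp add: sum_subtractf sum_distrib_left Int_commute)

lemma perturbed_constraint_le:
  fixes a k n s \<epsilon> :: real
  assumes "0 \<le> a" "a \<le> s" "a \<le> n" "0 \<le> k" "0 < \<epsilon>"
    and slack: "a < s \<Longrightarrow> \<epsilon> \<le> (s - a) / (n + 1)" and tight: "a = s \<Longrightarrow> s \<le> k"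
  shows "(1 + \<epsilon>) * a - \<epsilon> * k \<le> s"
proof (cases "a < s")
  case True
  have "\<epsilon> * a \<le> (s - a) / (n + 1) * a" using slack[OF True] assms(1) by (rule mult_right_mono)
  also have "\<dots> = (s - a) * (a / (n + 1))" by simp
  also have "\<dots> \<le> (s - a) * 1"
    using True assms(1,3) by (intro mult_left_mono) (auto simp: divide_simps)
  finally have "\<epsilon> * a \<le> s - a" by simp
  moreover have "0 \<le> \<epsilon> * k" using assms(4,5) by simp
  ultimately show ?thesis by (simp add: algebra_simps)
next
  case False
  then have "a = s" using assms(2) by simp
  then show ?thesis using tight assms(5) by (simp add: algebra_simps)
qed

text \<open>\<open>\<epsilon>\<close> is bounded by the entries of \<open>x\<close> on \<open>T\<close> and by the slacks of the non-tight constraints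
  (scaled by \<open>1 / |V|\<close>); on tight sets the lower bound on \<open>|T \<inter> E(S)|\<close> keeps the constraint.\<close>

lemma perturbation_in_PST:
  assumes G: "graph V E ends" and x: "x \<in> PST V E ends" and TE: "T \<subseteq> E"
    and T_supp: "\<forall>e\<in>T. 0 < x e" and card_T: "real (card T) = real (card V) - 1"
    and T_tight: "\<forall>S. tight V E ends x S \<longrightarrow> real (card S) - 1 \<le> real (card (T \<inter> Ein E ends S))"
  obtains \<epsilon> where "\<epsilon> > 0" "(\<lambda>e. (1 + \<epsilon>) * x e - \<epsilon> * of_bool (e \<in> T)) \<in> PST V E ends"
proof -
  have fE: "finite E" and fV: "finite V" using G unfolding graph_def by auto
  have fT: "finite T" using TE fE by (rule finite_subset)
  have sum_E: "sum x E = real (card V) - 1" and x_nonneg: "\<forall>e\<in>E. 0 \<le> x e"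
    using x unfolding PST_def by auto
  define slacks where "slacks = (\<lambda>S. (real (card S) - 1 - sum x (Ein E ends S)) / real (card V)) `
      {S \<in> Pow V. S \<noteq> {} \<and> sum x (Ein E ends S) < real (card S) - 1}"
  define M where "M = insert 1 (slacks \<union> x ` T)"
  define \<epsilon> where "\<epsilon> = Min M"
  have fM: "finite M" unfolding M_def slacks_def using fV fT by auto
  have "m > 0" if m_slack: "m \<in> slacks" for m
  proof -
    obtain S where m: "m = (real (card S) - 1 - sum x (Ein E ends S)) / real (card V)"
      and S: "S \<in> {S \<in> Pow V. S \<noteq> {} \<and> sum x (Ein E ends S) < real (card S) - 1}"
      using m_slack unfolding slacks_def by (rule imageE)
    have "card V > 0" using S fV by (auto simp: card_gt_0_iff)
    then show ?thesis using S unfolding m by simp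
  qed
  then have "\<forall>m\<in>M. m > 0" unfolding M_def using T_supp by auto
  then have \<epsilon>_pos: "\<epsilon> > 0" unfolding \<epsilon>_def using fM by (simp add: M_def)
  have \<epsilon>_le: "\<epsilon> \<le> m" if "m \<in> M" for m unfolding \<epsilon>_def using fM that by simp
  define xe where "xe = (\<lambda>e. (1 + \<epsilon>) * x e - \<epsilon> * of_bool (e \<in> T))"
  have "xe \<in> PST V E ends"
    unfolding PST_def mem_Collect_eq
  proof (intro conjI allI impI ballI)
    fix e assume e: "e \<in> E"
    show "0 \<le> xe e"
    proof (cases "e \<in> T")
      case True
      then have "\<epsilon> \<le> x e" using \<epsilon>_le by (simp add: M_def)
      moreover have "0 \<le> \<epsilon> * x e" using \<epsilon>_pos x_nonneg e by simp
      ultimately show ?thesis using True by (simp add: xe_def algebra_simps)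
    qed (use \<epsilon>_pos x_nonneg e in \<open>simp add: xe_def\<close>)
  next
    fix S assume S: "S \<noteq> {} \<and> S \<subset> V"
    have fin_Ein: "finite (Ein E ends S)" using fE by (simp add: Ein_def)
    have "sum x (Ein E ends S) \<le> sum x E"
      using x_nonneg fE by (intro sum_mono2) (auto simp: Ein_def)
    show "sum xe (Ein E ends S) \<le> real (card S) - 1"
      unfolding xe_def sum_perturbed[OF fin_Ein]
    proof (rule perturbed_constraint_le[where n = "real (card V) - 1"])
      show "0 \<le> sum x (Ein E ends S)" using x_nonneg by (intro sum_nonneg) (auto simp: Ein_def)
      show "sum x (Ein E ends S) \<le> real (card S) - 1" using x S unfolding PST_def by blast
      show "sum x (Ein E ends S) \<le> real (card V) - 1"
        using \<open>sum x (Ein E ends S) \<le> sum x E\<close> sum_E by simp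
      show "\<epsilon> \<le> (real (card S) - 1 - sum x (Ein E ends S)) / (real (card V) - 1 + 1)"
        if "sum x (Ein E ends S) < real (card S) - 1"
        using \<epsilon>_le S that by (auto simp: M_def slacks_def)
      show "real (card S) - 1 \<le> real (card (T \<inter> Ein E ends S))"
        if "sum x (Ein E ends S) = real (card S) - 1"
        using T_tight S that unfolding tight_def by auto
    qed (use \<epsilon>_pos in auto)
  next
    show "sum xe E = real (card V) - 1"
      unfolding xe_def sum_perturbed[OF fE] sum_E Int_absorb2[OF TE] card_T by (simp add: algebra_simps)
  qed
  then show ?thesis using that \<epsilon>_pos unfolding xe_def by blast
qed

lemma tree_cost_le_optimum:
  assumes G: "graph V E ends" and x: "x \<in> PST V E ends" and TE: "T \<subseteq> E"
    and T_supp: "\<forall>e\<in>T. 0 < x e" and card_T: "real (card T) = real (card V) - 1"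
    and T_tight: "\<forall>S. tight V E ends x S \<longrightarrow> real (card S) - 1 \<le> real (card (T \<inter> Ein E ends S))"
    and opt: "\<And>z. z \<in> PST V E ends \<Longrightarrow> (\<Sum>e\<in>E. w e * x e) \<le> (\<Sum>e\<in>E. w e * z e)"
  shows "sum w T \<le> (\<Sum>e\<in>E. w e * x e)"
proof -
  have fE: "finite E" using G unfolding graph_def by auto
  obtain \<epsilon> where \<epsilon>: "\<epsilon> > 0" and xe: "(\<lambda>e. (1 + \<epsilon>) * x e - \<epsilon> * of_bool (e \<in> T)) \<in> PST V E ends"
    using perturbation_in_PST[OF G x TE T_supp card_T T_tight] by blast
  have "(\<Sum>e\<in>E. w e * x e) \<le> (\<Sum>e\<in>E. w e * ((1 + \<epsilon>) * x e - \<epsilon> * of_bool (e \<in> T)))"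
    by (rule opt[OF xe])
  also have "\<dots> = (1 + \<epsilon>) * (\<Sum>e\<in>E. w e * x e) - \<epsilon> * (\<Sum>e\<in>E. of_bool (e \<in> T) * w e)"
    by (simp add: algebra_simps sum_subtractf sum_distrib_left)
  also have "(\<Sum>e\<in>E. of_bool (e \<in> T) * w e) = sum w T"
    using fE TE by (simp add: Int_absorb1)
  finally have "\<epsilon> * sum w T \<le> \<epsilon> * (\<Sum>e\<in>E. w e * x e)" by (simp add: algebra_simps)
  then show ?thesis using \<epsilon> by simp
qed

theorem lemma6:
  fixes V :: "'a set" and E :: "'e set" and ends :: "'e \<Rightarrow> 'a set"
    and c :: "'e \<Rightarrow> real" and \<S> :: "'a set set" and b :: "'a set \<Rightarrow> int"
    and lam :: real and xs x' :: "'e \<Rightarrow> real" and \<L> \<L>' :: "'a set set"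
    and TL :: "'a set \<Rightarrow> 'e set" and T :: "'e set" and ys :: "'a set \<Rightarrow> real"
  assumes G: "graph V E ends" and conn: "connected_on V E ends"
    and c_nonneg: "\<forall>e\<in>E. c e \<ge> 0"
    and chain: "chain_family V \<S>"
    and lam: "lam > 1"
    and feas: "\<exists>x. feasible_P V E ends \<S> b lam x"
    and xs_opt: "optimal_P V E ends c \<S> b lam xs"
    and L_dec: "laminar_decomp V E ends xs \<L>"
    and rf: "rainbow_free V E ends \<S> x' \<L>'"
    and supp_sub: "supp E x' \<subseteq> supp E xs"
    and L_sub: "\<L> \<subseteq> \<L>'"
    and cut_le: "\<forall>S\<in>\<S>. sum x' (delta E ends S) \<le> sum xs (delta E ends S)"
    and TL: "\<forall>L0\<in>\<L>'. TL L0 \<subseteq> supp E x' \<and>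
               spanning_tree (contr_nodes \<L>' L0) (contr_edges E ends \<L>' L0) (contr_ends ends \<L>' L0) (TL L0)"
    and T: "T = (\<Union>L0\<in>\<L>'. TL L0)"
    and ys_opt: "optimal_dual V E ends c \<S> b lam ys"
  shows "sum c T \<le> (\<Sum>e\<in>E. cy E ends c \<S> ys e * xs e) \<and>
         (\<Sum>e\<in>E. cy E ends c \<S> ys e * xs e) =
           (\<Sum>e\<in>E. c e * xs e) + lam * (\<Sum>S\<in>\<S>. real_of_int (b S) * ys S)"
proof -
  have fS: "finite \<S>" using chain unfolding chain_family_def by blast
  note duality = strong_duality[OF G c_nonneg fS xs_opt ys_opt]
  have xsP: "xs \<in> PST V E ends" using xs_opt unfolding optimal_P_def feasible_P_def by blast
  have dec': "laminar_decomp V E ends x' \<L>'" using rf unfolding rainbow_free_def by blast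
  have T_inside: "\<forall>L\<in>\<L>'. real (card (T \<inter> Ein E ends L)) = real (card L) - 1"
    unfolding T using TL
    by (intro ballI card_edges_inside_laminar_decomp[OF G dec']) (auto simp: spanning_tree_def)
  have TE: "T \<subseteq> E" and T_supp: "\<forall>e\<in>T. 0 < xs e"
    using TL supp_sub unfolding T supp_def by blast+
  have "real (card T) = real (card V) - 1"
    using T_inside V_mem_laminar_decomp[OF G dec'] Ein_V[OF G] TE by (metis inf.absorb1)
  moreover have "\<forall>S. tight V E ends xs S \<longrightarrow> real (card S) - 1 \<le> real (card (T \<inter> Ein E ends S))"
    using tight_set_spanned[OF G L_dec T_supp] T_inside L_sub by blast
  ultimately have "sum (cy E ends c \<S> ys) T \<le> (\<Sum>e\<in>E. cy E ends c \<S> ys e * xs e)"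
    using tree_cost_le_optimum[OF G xsP TE T_supp] duality(2) by blast
  moreover have "sum c T \<le> sum (cy E ends c \<S> ys) T"
    using ys_opt unfolding optimal_dual_def by (intro sum_mono cost_le_cy) auto
  ultimately show ?thesis using duality(1) by simp
qed

end
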